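(* Let $F_1,F_2$ be analytic in a neighborhood of $1$, let $k,l$ be positive integers, and let $\mathbf a^{l,r}_{i,[2]}$ be the Taylor coefficients $x^lF_2(x)^{l-r}=\sum_{n\ge0}\mathbf a^{l,r}_{n,[2]}(x-1)^n$ at $x=1$ ($0\le r\le l$, $F_2^0\equiv1$). Put $$B_{l,r}(x)=\frac{x^lF_2(x)^{l-r}-\sum_{i=0}^{r-1}\mathbf a^{l,r}_{i,[2]}(x-1)^i}{(x-1)^r},\qquad \mathfrak F_j(z)=\frac1z+1+(1+z)F_j(1+z),\ j=1,2.$$ Then $$k\sum_{q=0}^{k-1}\sum_{r=0}^l\binom lr\binom{k-1}q\frac1{(q+1)!}\partial_x^q\big(x^kF_1(x)^{k-1-q}B'_{l,r}(x)\big)\Big|_{x=1}=\frac1{(2\pi\mathbf i)^2}\oint_{|z|=\epsilon}\oint_{|w|=2\epsilon}\frac{\mathfrak F_1(z)^k\mathfrak F_2(w)^l}{(z-w)^2}dz\,dw,$$ with counter-clockwise contours and $\epsilon>0$ small.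
   Context: $B_{l,r}$ is analytic near $x=1$ (removable singularity), and $B'_{l,r}$ denotes its derivative. *)

theory Defs
  imports "HOL-Analysis.Analysis"
begin

(* Counter-clockwise contour integral over the circle |z| = r, written out via the
   standard parametrisation t \<mapsto> r * exp(2 pi i t), t \<in> [0,1] (this is what the
   HOL-Complex_Analysis notion contour_integral (circlepath 0 r) unfolds to). *)
definition circ_int :: "real \<Rightarrow> (complex \<Rightarrow> complex) \<Rightarrow> complex" where
  "circ_int r f = integral {0..1}
     (\<lambda>t::real. f (complex_of_real r * exp (2 * complex_of_real pi * \<i> * complex_of_real t))
        * (2 * complex_of_real pi * \<i> * complex_of_real r * exp (2 * complex_of_real pi * \<i> * complex_of_real t)))"

definition tcoef :: "(complex \<Rightarrow> complex) \<Rightarrow> nat \<Rightarrow> complex" where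
  "tcoef g n = (deriv ^^ n) g 1 / of_nat (fact n)"

definition gfun :: "(complex \<Rightarrow> complex) \<Rightarrow> nat \<Rightarrow> nat \<Rightarrow> complex \<Rightarrow> complex" where
  "gfun F2 l r x = x ^ l * F2 x ^ (l - r)"

(* B_{l,r}, with its removable singularity at x = 1 filled in by the limit value a_r *)
definition Bfun :: "(complex \<Rightarrow> complex) \<Rightarrow> nat \<Rightarrow> nat \<Rightarrow> complex \<Rightarrow> complex" where
  "Bfun F2 l r x =
     (if x = 1 then tcoef (gfun F2 l r) r
      else (gfun F2 l r x - (\<Sum>i<r. tcoef (gfun F2 l r) i * (x - 1) ^ i)) / (x - 1) ^ r)"

definition frakF :: "(complex \<Rightarrow> complex) \<Rightarrow> complex \<Rightarrow> complex" where
  "frakF F z = 1 / z + 1 + (1 + z) * F (1 + z)"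

end

theory Submission
  imports Defs "HOL-Complex_Analysis.Complex_Analysis"
begin

(* Substitute x = 1 + t and work with power series at 0.  If A_j is the expansion of F_j(1 + t),
   then z * frakF F_j z = (1 + z)(1 + z F_j(1 + z)) has the expansion (1 + X)(1 + X A_j), so both
   contour integrals are coefficient extractions by Cauchy's formula: for |z| < |w| the inner one
   takes the coefficient of z^(k-1) in (z * frakF F_1 z)^k / (z - w)^2, expanded in powers of z/w,
   and the outer one then takes coefficients of (w * frakF F_2 w)^l.  On the left, B_{l,r}(1 + t)
   is the r-fold shift of the expansion of x^l F_2(x)^(l-r), and by the binomial theorem
   sum_r (l choose r) B_{l,r} is the l-fold shift of (w * frakF F_2 w)^l.  What remains is an
   identity between coefficients of formal power series. *)

lemma circ_int_eq_contour_integral: "circ_int r f = contour_integral (circlepath 0 r) f"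
  unfolding circ_int_def contour_integral_integral vector_derivative_circlepath
  unfolding circlepath by (simp add: mult_ac)

lemma deriv_shift: "deriv (\<lambda>t. f (c + t)) = (\<lambda>t. deriv f (c + t))"
proof
  fix t
  have "((\<lambda>t. f (c + t)) has_field_derivative D) (at t)
      \<longleftrightarrow> (f has_field_derivative D) (at (c + t))" for D
    using DERIV_shift[of f D t c] by (simp add: add.commute)
  then show "deriv (\<lambda>t. f (c + t)) t = deriv f (c + t)"
    by (simp add: deriv_def)
qed

lemma holomorphic_on_shift:
  assumes "f holomorphic_on ball c R"
  shows "(\<lambda>t. f (c + t)) holomorphic_on ball 0 R"
proof -
  have "(f \<circ> (\<lambda>t. c + t)) holomorphic_on ball 0 R"
    by (rule holomorphic_on_compose_gen[OF _ assms]) (auto intro!: holomorphic_intros simp: dist_norm)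
  then show ?thesis by (simp add: o_def)
qed

lemma fps_expansion_shift_0: "fps_expansion (\<lambda>t. f (c + t)) 0 = fps_expansion f c"
  by (simp add: fps_expansion_def higher_deriv_shift_0[of _ f c] o_def)

lemma has_fps_expansion_fps_expansion_shifted:
  assumes "f holomorphic_on ball c R" "0 < R"
  shows "(\<lambda>t. f (c + t)) has_fps_expansion fps_expansion f c"
  using has_fps_expansion_fps_expansion[OF _ _ holomorphic_on_shift[OF assms(1)]] assms(2)
  by (simp add: fps_expansion_shift_0)

lemma higher_deriv_eq_fps_nth_shifted:
  fixes f :: "complex \<Rightarrow> complex"
  assumes "(\<lambda>t. f (c + t)) has_fps_expansion F"
  shows "(deriv ^^ n) f c = fact n * F $ n"
proof -
  have "(deriv ^^ n) f c = (deriv ^^ n) (\<lambda>t. f (c + t)) 0"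
    by (simp only: higher_deriv_shift_0[of n f c] o_def)
  then show ?thesis
    using fps_nth_fps_expansion[OF assms, of n] by simp
qed

lemma has_fps_expansion_deriv_shifted:
  fixes f :: "complex \<Rightarrow> complex"
  assumes "(\<lambda>t. f (c + t)) has_fps_expansion F"
  shows "(\<lambda>t. deriv f (c + t)) has_fps_expansion fps_deriv F"
  using has_fps_expansion_deriv[OF assms] unfolding deriv_shift .

lemma eval_fps_eq_sum_plus_shift:
  fixes F :: "'a :: {banach, real_normed_div_algebra, comm_ring_1} fps"
  assumes "norm z < fps_conv_radius F"
  shows "eval_fps F z = (\<Sum>i<n. F $ i * z ^ i) + z ^ n * eval_fps (fps_shift n F) z"
proof -
  have F: "summable (\<lambda>i. F $ i * z ^ i)"
    using assms by (rule summable_fps)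
  have shift: "summable (\<lambda>i. fps_shift n F $ i * z ^ i)"
    using assms by (intro summable_fps) simp
  have "eval_fps F z = (\<Sum>i. F $ (i + n) * z ^ (i + n)) + (\<Sum>i<n. F $ i * z ^ i)"
    unfolding eval_fps_def using suminf_split_initial_segment[OF F, of n] by simp
  also have "(\<Sum>i. F $ (i + n) * z ^ (i + n)) = (\<Sum>i. z ^ n * (fps_shift n F $ i * z ^ i))"
    by (simp add: power_add mult_ac)
  also have "\<dots> = z ^ n * eval_fps (fps_shift n F) z"
    unfolding eval_fps_def using shift by (rule suminf_mult)
  finally show ?thesis by simp
qed

lemma has_fps_expansion_remainder_quotient:
  fixes F :: "complex fps"
  assumes "f has_fps_expansion F"
  shows "(\<lambda>z. if z = 0 then F $ n else (f z - (\<Sum>i<n. F $ i * z ^ i)) / z ^ n)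
           has_fps_expansion fps_shift n F"
proof -
  have "eventually (\<lambda>z. z \<in> eball 0 (fps_conv_radius F)) (nhds 0)"
    using assms by (intro eventually_nhds_in_open) (auto simp: has_fps_expansion_def zero_ereal_def)
  moreover have "eventually (\<lambda>z. eval_fps F z = f z) (nhds 0)"
    using assms by (simp add: has_fps_expansion_def)
  ultimately have "eventually (\<lambda>z. eval_fps (fps_shift n F) z
      = (if z = 0 then F $ n else (f z - (\<Sum>i<n. F $ i * z ^ i)) / z ^ n)) (nhds 0)"
  proof eventually_elim
    case (elim z)
    show ?case
    proof (cases "z = 0")
      case False
      have "f z = (\<Sum>i<n. F $ i * z ^ i) + z ^ n * eval_fps (fps_shift n F) z"
        using elim eval_fps_eq_sum_plus_shift[of z F n] by simp
      then show ?thesis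
        using False by (simp add: nonzero_eq_divide_eq mult.commute)
    qed (simp add: eval_fps_at_0)
  qed
  moreover have "fps_conv_radius (fps_shift n F) > 0"
    using assms by (simp add: has_fps_expansion_def)
  ultimately show ?thesis
    unfolding has_fps_expansion_def by blast
qed

lemma has_fps_expansion_inverse_diff_square:
  fixes w :: complex
  assumes "w \<noteq> 0"
  shows "(\<lambda>z. 1 / (z - w) ^ 2) has_fps_expansion Abs_fps (\<lambda>n. of_nat (n + 1) / w ^ (n + 2))"
proof -
  have "(\<lambda>z::complex. inverse ((1 - z) ^ 2)) has_fps_expansion inverse ((1 - fps_X) ^ 2)"
    by (intro has_fps_expansion_inverse fps_expansion_intros) simp
  then have "(\<lambda>z::complex. inverse ((1 - z) ^ 2)) has_fps_expansion Abs_fps (\<lambda>n. of_nat (n + 1))"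
    by (simp add: fps_one_over_one_minus_fps_X_squared)
  moreover have "(\<lambda>z. 1 / w * z) has_fps_expansion fps_const (1 / w) * fps_X"
    by (intro fps_expansion_intros)
  ultimately have "((\<lambda>z. inverse ((1 - z) ^ 2)) \<circ> (\<lambda>z. 1 / w * z)) has_fps_expansion
      fps_compose (Abs_fps (\<lambda>n. of_nat (n + 1))) (fps_const (1 / w) * fps_X)"
    by (rule has_fps_expansion_compose) simp
  then have "(\<lambda>z. 1 / w ^ 2 * inverse ((1 - z / w) ^ 2)) has_fps_expansion
      fps_const (1 / w ^ 2) * Abs_fps (\<lambda>n. (1 / w) ^ n * of_nat (n + 1))"
    unfolding fps_compose_linear by (intro fps_expansion_intros) (simp add: o_def)
  also have "(\<lambda>z. 1 / w ^ 2 * inverse ((1 - z / w) ^ 2)) = (\<lambda>z. 1 / (z - w) ^ 2)"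
  proof
    fix z
    have "w ^ 2 * (1 - z / w) ^ 2 = (z - w) ^ 2"
      using assms by (simp add: power2_eq_square field_simps)
    moreover have "1 / w ^ 2 * inverse ((1 - z / w) ^ 2) = 1 / (w ^ 2 * (1 - z / w) ^ 2)"
      by (simp add: divide_inverse inverse_mult_distrib)
    ultimately show "1 / w ^ 2 * inverse ((1 - z / w) ^ 2) = 1 / (z - w) ^ 2"
      by simp
  qed
  also have "fps_const (1 / w ^ 2) * Abs_fps (\<lambda>n. (1 / w) ^ n * of_nat (n + 1))
      = Abs_fps (\<lambda>n. of_nat (n + 1) / w ^ (n + 2))"
    by (rule fps_ext) (simp add: power_add power_divide power2_eq_square)
  finally show ?thesis .
qed

lemma has_contour_integral_circlepath_fps_nth:
  assumes "f holomorphic_on ball 0 R" "f has_fps_expansion F" "0 < \<rho>" "\<rho> < R"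
  shows "((\<lambda>z. f z / z ^ Suc n) has_contour_integral 2 * pi * \<i> * F $ n) (circlepath 0 \<rho>)"
proof -
  have "cball 0 \<rho> \<subseteq> ball (0::complex) R"
    using assms by auto
  then have "((\<lambda>z. f z / (z - 0) ^ Suc n) has_contour_integral
      (2 * pi * \<i>) / fact n * (deriv ^^ n) f 0) (circlepath 0 \<rho>)"
    using assms by (intro Cauchy_has_contour_integral_higher_derivative_circlepath
        holomorphic_on_imp_continuous_on holomorphic_on_subset[OF assms(1)]) auto
  then show ?thesis
    using fps_nth_fps_expansion[OF assms(2), of n] by simp
qed

lemma has_contour_integral_circlepath_div_power_div_square:
  assumes g: "g holomorphic_on ball 0 R" "g has_fps_expansion G"
    and \<rho>: "0 < \<rho>" "\<rho> < R" "\<rho> < norm w" and "0 < k"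
  shows "((\<lambda>z. g z / z ^ k / (z - w) ^ 2) has_contour_integral
           2 * pi * \<i> * (\<Sum>i<k. G $ i * of_nat (k - i) / w ^ (k - i + 1))) (circlepath 0 \<rho>)"
proof -
  obtain n where k: "k = Suc n"
    using \<open>0 < k\<close> gr0_implies_Suc by blast
  have "w \<noteq> 0"
    using \<rho> by auto
  have hol: "(\<lambda>z. g z * (1 / (z - w) ^ 2)) holomorphic_on ball 0 (min R (norm w))"
    using holomorphic_on_subset[OF g(1) subset_ball[OF min.cobounded1]]
    by (intro holomorphic_intros) auto
  have exp: "(\<lambda>z. g z * (1 / (z - w) ^ 2)) has_fps_expansion
      G * Abs_fps (\<lambda>n. of_nat (n + 1) / w ^ (n + 2))"
    by (intro has_fps_expansion_mult g(2) has_fps_expansion_inverse_diff_square \<open>w \<noteq> 0\<close>)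
  have "((\<lambda>z. g z * (1 / (z - w) ^ 2) / z ^ Suc n) has_contour_integral
      2 * pi * \<i> * (G * Abs_fps (\<lambda>n. of_nat (n + 1) / w ^ (n + 2))) $ n) (circlepath 0 \<rho>)"
    using \<rho> by (intro has_contour_integral_circlepath_fps_nth[OF hol exp]) auto
  moreover have "(G * Abs_fps (\<lambda>n. of_nat (n + 1) / w ^ (n + 2))) $ n
      = (\<Sum>i<k. G $ i * of_nat (k - i) / w ^ (k - i + 1))"
    unfolding fps_mult_nth k atLeast0AtMost lessThan_Suc_atMost
    by (intro sum.cong refl) (simp add: Suc_diff_le)
  moreover have "(\<lambda>z. g z * (1 / (z - w) ^ 2) / z ^ Suc n) = (\<lambda>z. g z / z ^ k / (z - w) ^ 2)"
    by (simp add: k mult.commute)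
  ultimately show ?thesis
    by simp
qed

lemma has_contour_integral_circlepath_mult_sum_inverse_powers:
  assumes "h holomorphic_on ball 0 R" "h has_fps_expansion H" "0 < \<rho>" "\<rho> < R"
  shows "((\<lambda>w. h w / w ^ l * (\<Sum>i<k. c i / w ^ (k - i + 1))) has_contour_integral
           2 * pi * \<i> * (\<Sum>i<k. c i * H $ (l + k - i))) (circlepath 0 \<rho>)"
proof -
  have "((\<lambda>w. \<Sum>i<k. c i * (h w / w ^ Suc (l + k - i))) has_contour_integral
      (\<Sum>i<k. c i * (2 * pi * \<i> * H $ (l + k - i)))) (circlepath 0 \<rho>)"
    by (intro has_contour_integral_sum has_contour_integral_lmul
        has_contour_integral_circlepath_fps_nth[OF assms]) auto
  moreover have "h w / w ^ l * (\<Sum>i<k. c i / w ^ (k - i + 1))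
      = (\<Sum>i<k. c i * (h w / w ^ Suc (l + k - i)))" for w
  proof -
    have "h w / w ^ l * (c i / w ^ (k - i + 1)) = c i * (h w / w ^ Suc (l + k - i))" if "i < k" for i
    proof -
      have "Suc (l + k - i) = l + (k - i + 1)"
        using that by simp
      then show ?thesis
        by (simp add: power_add times_divide_times_eq mult.commute)
    qed
    then show ?thesis
      unfolding sum_distrib_left by (intro sum.cong) auto
  qed
  ultimately show ?thesis
    by (simp add: sum_distrib_left mult_ac)
qed

definition frakF_numer :: "(complex \<Rightarrow> complex) \<Rightarrow> complex \<Rightarrow> complex" where
  "frakF_numer F z = (1 + z) * (1 + z * F (1 + z))"

definition frakF_fps :: "complex fps \<Rightarrow> complex fps" where
  "frakF_fps A = (1 + fps_X) * (1 + fps_X * A)"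

lemma frakF_eq_frakF_numer_div: "z \<noteq> 0 \<Longrightarrow> frakF F z = frakF_numer F z / z"
  by (simp add: frakF_def frakF_numer_def field_simps)

lemma holomorphic_on_frakF_numer:
  "F holomorphic_on ball 1 R \<Longrightarrow> frakF_numer F holomorphic_on ball 0 R"
  unfolding frakF_numer_def by (intro holomorphic_intros holomorphic_on_shift)

lemma has_fps_expansion_frakF_numer:
  "F holomorphic_on ball 1 R \<Longrightarrow> 0 < R \<Longrightarrow>
     frakF_numer F has_fps_expansion frakF_fps (fps_expansion F 1)"
  unfolding frakF_numer_def frakF_fps_def
  by (intro fps_expansion_intros has_fps_expansion_fps_expansion_shifted)

lemma continuous_on_frakF:
  assumes "F holomorphic_on ball 1 R"
  shows "continuous_on (ball 0 R - {0}) (frakF F)"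
proof -
  have "continuous_on (ball 0 R - {0}) (\<lambda>z. F (1 + z))"
    using holomorphic_on_shift[OF assms]
    by (intro holomorphic_on_imp_continuous_on) (rule holomorphic_on_subset, auto)
  then show ?thesis
    unfolding frakF_def by (intro continuous_intros) auto
qed

lemma double_contour_integral_frakF:
  fixes k l :: nat
  assumes F1: "F1 holomorphic_on ball 1 R" and F2: "F2 holomorphic_on ball 1 R"
    and \<epsilon>: "0 < \<epsilon>" "2 * \<epsilon> < R" and "0 < k"
  defines "Q \<equiv> frakF_fps (fps_expansion F1 1) ^ k" and "P \<equiv> frakF_fps (fps_expansion F2 1) ^ l"
  shows "contour_integral (circlepath 0 \<epsilon>) (\<lambda>z. contour_integral (circlepath 0 (2 * \<epsilon>))
           (\<lambda>w. frakF F1 z ^ k * frakF F2 w ^ l / (z - w) ^ 2))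
       = (2 * pi * \<i>) ^ 2 * (\<Sum>i<k. Q $ i * of_nat (k - i) * P $ (l + k - i))"
proof -
  define f where "f = (\<lambda>z w. frakF F1 z ^ k * frakF F2 w ^ l / (z - w) ^ 2)"
  have R: "0 < R"
    using \<epsilon> by simp
  have "continuous_on (sphere 0 \<epsilon> \<times> sphere 0 (2 * \<epsilon>))
      (\<lambda>p. frakF F1 (fst p) ^ k * frakF F2 (snd p) ^ l / (fst p - snd p) ^ 2)"
    using \<epsilon> by (intro continuous_intros continuous_on_compose2[OF continuous_on_frakF[OF F1]]
        continuous_on_compose2[OF continuous_on_frakF[OF F2]]) auto
  then have "contour_integral (circlepath 0 \<epsilon>) (\<lambda>z. contour_integral (circlepath 0 (2 * \<epsilon>)) (f z))
      = contour_integral (circlepath 0 (2 * \<epsilon>)) (\<lambda>w. contour_integral (circlepath 0 \<epsilon>) (\<lambda>z. f z w))"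
    using \<epsilon> by (intro contour_integral_swap)
      (auto simp: f_def case_prod_unfold vector_derivative_circlepath intro!: continuous_intros)
  also have "\<dots> = contour_integral (circlepath 0 (2 * \<epsilon>)) (\<lambda>w. 2 * pi * \<i> *
      (frakF_numer F2 w ^ l / w ^ l * (\<Sum>i<k. Q $ i * of_nat (k - i) / w ^ (k - i + 1))))"
  proof (rule contour_integral_cong[OF refl])
    fix w
    assume "w \<in> path_image (circlepath 0 (2 * \<epsilon>))"
    then have w: "norm w = 2 * \<epsilon>"
      using \<epsilon> by simp
    then have "w \<noteq> 0"
      using \<epsilon> by auto
    have "((\<lambda>z. frakF F2 w ^ l * (frakF_numer F1 z ^ k / z ^ k / (z - w) ^ 2)) has_contour_integral
        frakF F2 w ^ l * (2 * pi * \<i> * (\<Sum>i<k. Q $ i * of_nat (k - i) / w ^ (k - i + 1))))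
        (circlepath 0 \<epsilon>)"
      unfolding Q_def using \<epsilon> w \<open>0 < k\<close>
      by (intro has_contour_integral_lmul has_contour_integral_circlepath_div_power_div_square[OF
          holomorphic_on_power[OF holomorphic_on_frakF_numer[OF F1]]
          has_fps_expansion_power[OF has_fps_expansion_frakF_numer[OF F1 R]]]) auto
    then have inner: "((\<lambda>z. f z w) has_contour_integral
        frakF F2 w ^ l * (2 * pi * \<i> * (\<Sum>i<k. Q $ i * of_nat (k - i) / w ^ (k - i + 1))))
        (circlepath 0 \<epsilon>)"
      by (rule has_contour_integral_eq)
        (use \<epsilon> in \<open>auto simp: f_def frakF_eq_frakF_numer_div power_divide\<close>)
    show "contour_integral (circlepath 0 \<epsilon>) (\<lambda>z. f z w) = 2 * pi * \<i> *
        (frakF_numer F2 w ^ l / w ^ l * (\<Sum>i<k. Q $ i * of_nat (k - i) / w ^ (k - i + 1)))"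
      using contour_integral_unique[OF inner] \<open>w \<noteq> 0\<close>
      by (simp add: frakF_eq_frakF_numer_div power_divide mult_ac)
  qed
  also have "\<dots> = 2 * pi * \<i> * (2 * pi * \<i> * (\<Sum>i<k. Q $ i * of_nat (k - i) * P $ (l + k - i)))"
    unfolding P_def using \<epsilon>
    by (intro contour_integral_unique has_contour_integral_lmul
        has_contour_integral_circlepath_mult_sum_inverse_powers[OF
          holomorphic_on_power[OF holomorphic_on_frakF_numer[OF F2]]
          has_fps_expansion_power[OF has_fps_expansion_frakF_numer[OF F2 R]]]) auto
  finally show ?thesis
    unfolding f_def by (simp add: power2_eq_square)
qed

lemma has_fps_expansion_Bfun:
  assumes "(\<lambda>t. gfun F2 l r (1 + t)) has_fps_expansion G"
  shows "(\<lambda>t. Bfun F2 l r (1 + t)) has_fps_expansion fps_shift r G"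
proof -
  have "tcoef (gfun F2 l r) i = G $ i" for i
    using higher_deriv_eq_fps_nth_shifted[OF assms, of i] by (simp add: tcoef_def)
  then have "(\<lambda>t. Bfun F2 l r (1 + t))
      = (\<lambda>t. if t = 0 then G $ r else (gfun F2 l r (1 + t) - (\<Sum>i<r. G $ i * t ^ i)) / t ^ r)"
    by (auto simp: Bfun_def)
  then show ?thesis
    using has_fps_expansion_remainder_quotient[OF assms, of r] by simp
qed

lemma higher_deriv_Bfun_term_at_1:
  assumes F1: "F1 holomorphic_on ball 1 R" and F2: "F2 holomorphic_on ball 1 R" and "0 < R"
  shows "(deriv ^^ q) (\<lambda>x. x ^ k * F1 x ^ m * deriv (Bfun F2 l r) x) 1
     = fact q * ((1 + fps_X) ^ k * fps_expansion F1 1 ^ m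
         * fps_deriv (fps_shift r ((1 + fps_X) ^ l * fps_expansion F2 1 ^ (l - r)))) $ q"
proof -
  have "(\<lambda>t. gfun F2 l r (1 + t)) has_fps_expansion (1 + fps_X) ^ l * fps_expansion F2 1 ^ (l - r)"
    unfolding gfun_def
    by (intro fps_expansion_intros has_fps_expansion_fps_expansion_shifted[OF F2 \<open>0 < R\<close>])
  then have "(\<lambda>t. (1 + t) ^ k * F1 (1 + t) ^ m * deriv (Bfun F2 l r) (1 + t)) has_fps_expansion
      (1 + fps_X) ^ k * fps_expansion F1 1 ^ m
         * fps_deriv (fps_shift r ((1 + fps_X) ^ l * fps_expansion F2 1 ^ (l - r)))"
    by (intro fps_expansion_intros has_fps_expansion_fps_expansion_shifted[OF F1 \<open>0 < R\<close>]
        has_fps_expansion_deriv_shifted has_fps_expansion_Bfun)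
  then show ?thesis
    by (rule higher_deriv_eq_fps_nth_shifted[where f = "\<lambda>x. x ^ k * F1 x ^ m * deriv (Bfun F2 l r) x"])
qed

lemma frakF_fps_power_binomial:
  "frakF_fps A ^ n
     = (\<Sum>j\<le>n. fps_const (of_nat (n choose j)) * (fps_X ^ (n - j) * ((1 + fps_X) ^ n * A ^ (n - j))))"
proof -
  have "frakF_fps A ^ n = (1 + fps_X) ^ n * (1 + fps_X * A) ^ n"
    by (simp add: frakF_fps_def power_mult_distrib)
  also have "(1 + fps_X * A) ^ n = (\<Sum>j\<le>n. of_nat (n choose j) * 1 ^ j * (fps_X * A) ^ (n - j))"
    by (rule binomial_ring)
  finally show ?thesis
    by (simp add: sum_distrib_left power_mult_distrib fps_of_nat mult_ac)
qed

lemma fps_shift_frakF_fps_power: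
  "fps_shift n (frakF_fps A ^ n)
     = (\<Sum>r\<le>n. fps_const (of_nat (n choose r)) * fps_shift r ((1 + fps_X) ^ n * A ^ (n - r)))"
proof (rule fps_ext)
  fix m
  show "fps_shift n (frakF_fps A ^ n) $ m
      = (\<Sum>r\<le>n. fps_const (of_nat (n choose r)) * fps_shift r ((1 + fps_X) ^ n * A ^ (n - r))) $ m"
    unfolding fps_shift_nth frakF_fps_power_binomial fps_sum_nth fps_mult_left_const_nth
      fps_X_power_mult_nth
    by (intro sum.cong refl) auto
qed

lemma fps_nth_frakF_fps_power_mult:
  "(frakF_fps A ^ Suc n * D) $ n
     = (\<Sum>q\<le>n. of_nat (Suc n choose Suc q) * ((1 + fps_X) ^ Suc n * A ^ (n - q) * D) $ q)"
proof -
  have "(frakF_fps A ^ Suc n * D) $ n = (\<Sum>j\<le>Suc n. of_nat (Suc n choose j)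
      * (if n < Suc n - j then 0 else ((1 + fps_X) ^ Suc n * A ^ (Suc n - j) * D) $ (n - (Suc n - j))))"
    unfolding frakF_fps_power_binomial sum_distrib_right fps_sum_nth
    by (simp only: mult.assoc fps_mult_left_const_nth fps_X_power_mult_nth)
  also have "\<dots> = (\<Sum>q\<le>n. of_nat (Suc n choose Suc q) * ((1 + fps_X) ^ Suc n * A ^ (n - q) * D) $ q)"
    unfolding sum.atMost_Suc_shift
    by (simp del: binomial_Suc_Suc, intro sum.cong refl)
      (auto simp del: binomial_Suc_Suc simp add: Suc_diff_le)
  finally show ?thesis .
qed

lemma Suc_times_binomial_div_fact:
  "of_nat (Suc n) * of_nat (n choose q) / of_nat (fact (q + 1)) * fact q
     = (of_nat (Suc n choose Suc q) :: 'a :: field_char_0)"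
proof -
  have "(of_nat (Suc n) :: 'a) * of_nat (n choose q) = of_nat (Suc q) * of_nat (Suc n choose Suc q)"
    by (simp only: of_nat_mult[symmetric] Suc_times_binomial mult.commute)
  moreover have "(of_nat (fact (q + 1)) :: 'a) = of_nat (Suc q) * fact q"
    by (simp add: algebra_simps)
  ultimately show ?thesis
    by (simp del: binomial_Suc_Suc of_nat_Suc add: field_simps)
qed

lemma frakF_fps_coefficient_sum:
  fixes A B :: "complex fps" and k l :: nat
  assumes "0 < k"
  shows "of_nat k * (\<Sum>q<k. \<Sum>r\<le>l. of_nat (l choose r) * of_nat ((k - 1) choose q)
              / of_nat (fact (q + 1)) * (fact q * ((1 + fps_X) ^ k * A ^ (k - 1 - q)
                 * fps_deriv (fps_shift r ((1 + fps_X) ^ l * B ^ (l - r)))) $ q))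
       = (\<Sum>i<k. (frakF_fps A ^ k) $ i * of_nat (k - i) * (frakF_fps B ^ l) $ (l + k - i))"
proof -
  obtain n where k: "k = Suc n"
    using assms gr0_implies_Suc by blast
  define D where "D = fps_deriv (fps_shift l (frakF_fps B ^ l))"
  have D: "D = (\<Sum>r\<le>l. fps_const (of_nat (l choose r))
      * fps_deriv (fps_shift r ((1 + fps_X) ^ l * B ^ (l - r))))"
    by (simp add: D_def fps_shift_frakF_fps_power fps_deriv_sum)
  have "of_nat k * (\<Sum>q<k. \<Sum>r\<le>l. of_nat (l choose r) * of_nat ((k - 1) choose q)
              / of_nat (fact (q + 1)) * (fact q * ((1 + fps_X) ^ k * A ^ (k - 1 - q)
                 * fps_deriv (fps_shift r ((1 + fps_X) ^ l * B ^ (l - r)))) $ q))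
      = (\<Sum>q\<le>n. of_nat (Suc n choose Suc q) * ((1 + fps_X) ^ k * A ^ (n - q) * D) $ q)"
    unfolding sum_distrib_left k lessThan_Suc_atMost
  proof (intro sum.cong refl)
    fix q
    show "(\<Sum>r\<le>l. of_nat (Suc n) * (of_nat (l choose r) * of_nat ((Suc n - 1) choose q)
              / of_nat (fact (q + 1)) * (fact q * ((1 + fps_X) ^ Suc n * A ^ (Suc n - 1 - q)
                 * fps_deriv (fps_shift r ((1 + fps_X) ^ l * B ^ (l - r)))) $ q)))
        = of_nat (Suc n choose Suc q) * ((1 + fps_X) ^ Suc n * A ^ (n - q) * D) $ q"
      unfolding D sum_distrib_left fps_sum_nth
        mult.left_commute[of "(1 + fps_X) ^ Suc n * A ^ (n - q)"] fps_mult_left_const_nth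
        Suc_times_binomial_div_fact[symmetric]
      by (intro sum.cong refl) (simp add: divide_inverse mult_ac)
  qed
  also have "\<dots> = (frakF_fps A ^ k * D) $ n"
    unfolding k by (rule fps_nth_frakF_fps_power_mult [symmetric])
  also have "\<dots> = (\<Sum>i<k. (frakF_fps A ^ k) $ i * of_nat (k - i) * (frakF_fps B ^ l) $ (l + k - i))"
    unfolding fps_mult_nth k atLeast0AtMost lessThan_Suc_atMost
  proof (intro sum.cong refl)
    fix i
    assume "i \<in> {..n}"
    then have "Suc n - i = Suc (n - i)" "l + Suc n - i = Suc (n - i) + l"
      by auto
    then show "(frakF_fps A ^ Suc n) $ i * D $ (n - i)
        = (frakF_fps A ^ Suc n) $ i * of_nat (Suc n - i) * (frakF_fps B ^ l) $ (l + Suc n - i)"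
      by (simp add: D_def)
  qed
  finally show ?thesis .
qed

theorem mainTheorem15:
  fixes F1 F2 :: "complex \<Rightarrow> complex" and k l :: nat
  assumes "F1 analytic_on {1}" and "F2 analytic_on {1}" and "0 < k" and "0 < l"
  shows "\<exists>\<epsilon>0>0. \<forall>\<epsilon>::real. 0 < \<epsilon> \<and> \<epsilon> < \<epsilon>0 \<longrightarrow>
    of_nat k * (\<Sum>q<k. \<Sum>r\<le>l. of_nat (l choose r) * of_nat ((k - 1) choose q)
        / of_nat (fact (q + 1))
        * (deriv ^^ q) (\<lambda>x. x ^ k * F1 x ^ (k - 1 - q) * deriv (Bfun F2 l r) x) 1)
    = 1 / (2 * complex_of_real pi * \<i>) ^ 2 *
      circ_int \<epsilon> (\<lambda>z. circ_int (2 * \<epsilon>)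
        (\<lambda>w. frakF F1 z ^ k * frakF F2 w ^ l / (z - w) ^ 2))"
proof -
  obtain R1 R2 where "0 < R1" "F1 holomorphic_on ball 1 R1" "0 < R2" "F2 holomorphic_on ball 1 R2"
    using assms(1,2) unfolding analytic_on_def by blast
  then obtain R where R: "0 < R" "F1 holomorphic_on ball 1 R" "F2 holomorphic_on ball 1 R"
    by (metis holomorphic_on_subset min.cobounded1 min.cobounded2 min_less_iff_conj subset_ball)
  note lhs = frakF_fps_coefficient_sum[OF \<open>0 < k\<close>, of l "fps_expansion F1 1" "fps_expansion F2 1",
      folded higher_deriv_Bfun_term_at_1[OF R(2,3,1)]]
  show ?thesis
    unfolding lhs circ_int_eq_contour_integral
    using R(1) double_contour_integral_frakF[OF R(2,3) _ _ \<open>0 < k\<close>]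
    by (intro exI[of _ "R / 2"]) auto
qed

end
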